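(* There is a universal constant $C_{\mathrm{hg}}>1$ such that the following holds. Let $A$ be an $m_1\times m_2$ random matrix with i.i.d. Bernoulli$(p)$ entries, $p\in(0,1)$, let $\vec b=(b_1,\dots,b_{m_2})\in\{0,1,\dots,m_1\}^{m_2}$, and let $\Omega_{\vec b}(A)$ be the event that $|\mathrm{supp}(\mathbf C_i(A))|=b_i$ for all $i\in[m_2]$. Let $\emptyset\ne J_1\subset J_2\subset[m_2]$ and $r>0$ be such that $|\{j\in J_1:b_j\ge r\}|\ge|J_1|/2$ and $r\ge |J_2|\cdot\frac{24\|\vec b\|_\infty^2}{m_1}$. Then $$\mathbb{P}\Big\{|I_A(J_1,J_2)|<\frac{|J_1|r}{4}\ \Big|\ \Omega_{\vec b}(A)\Big\}\le C_{\mathrm{hg}}^{|J_1|/2}\exp\Big(-\log\Big(\frac{r}{24|J_2|\|\vec b\|_\infty^2/m_1}\Big)\frac{r|J_1|}{8}\Big).$$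
   Context: $\mathbf C_i(A)$ is the $i$-th column of $A$, $\mathrm{supp}$ the set of indices of nonzero entries, $\|\vec b\|_\infty=\max_i b_i$. For $J_1\subset J_2\subset[m_2]$, $I_A(J_1,J_2)=\{i\in[m_1]:\exists j_0\in J_1\text{ with }a_{ij_0}=1\text{ and }a_{ij}=0\text{ for all }j\in J_2\setminus\{j_0\}\}$. Conditioned on $\Omega_{\vec b}(A)$, the columns are independent and the support of column $i$ is uniform among $b_i$-subsets of $[m_1]$. *)

theory Defs
  imports "HOL-Probability.Probability"
begin

text \<open>An m1 x m2 0/1 matrix is a function on index pairs (row, column), rows {0..<m1},
  columns {0..<m2}; True means entry 1.\<close>

definition bern_matrix :: "nat \<Rightarrow> nat \<Rightarrow> real \<Rightarrow> (nat \<times> nat \<Rightarrow> bool) pmf" where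
  "bern_matrix m1 m2 p = Pi_pmf ({..<m1} \<times> {..<m2}) False (\<lambda>_. bernoulli_pmf p)"

definition col_supp :: "nat \<Rightarrow> (nat \<times> nat \<Rightarrow> bool) \<Rightarrow> nat \<Rightarrow> nat set" where
  "col_supp m1 A j = {i \<in> {..<m1}. A (i, j)}"

definition Omega_b :: "nat \<Rightarrow> nat \<Rightarrow> (nat \<Rightarrow> nat) \<Rightarrow> (nat \<times> nat \<Rightarrow> bool) set" where
  "Omega_b m1 m2 b = {A. \<forall>j<m2. card (col_supp m1 A j) = b j}"

definition I_A :: "nat \<Rightarrow> (nat \<times> nat \<Rightarrow> bool) \<Rightarrow> nat set \<Rightarrow> nat set \<Rightarrow> nat set" where
  "I_A m1 A J1 J2 = {i \<in> {..<m1}. \<exists>j0\<in>J1. A (i, j0) \<and> (\<forall>j\<in>J2 - {j0}. \<not> A (i, j))}"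

definition bnorm_inf :: "nat \<Rightarrow> (nat \<Rightarrow> nat) \<Rightarrow> nat" where
  "bnorm_inf m2 b = Max (b ` {..<m2})"

definition cond_prob :: "'a pmf \<Rightarrow> 'a set \<Rightarrow> 'a set \<Rightarrow> real" where
  "cond_prob P E F = measure_pmf.prob P (E \<inter> F) / measure_pmf.prob P F"

end

theory Submission
  imports Defs
begin

text \<open>Conditioned on \<open>Omega_b\<close> the column supports are independent uniform \<open>b j\<close>-subsets, so the
  conditional probability is a ratio of counts of support configurations. Let \<open>L\<close> be the columns of
  \<open>J1\<close> with \<open>b j \<ge> r\<close>, and reveal the columns of \<open>J2 - L\<close> first, then those of \<open>L\<close> in increasing
  order. A row met by a column \<open>j \<in> L\<close> is isolated, or lies in a support revealed before \<open>j\<close>, or is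
  met by a later column of \<open>L\<close>; hence \<open>\<Sum>j\<in>L. b j \<le> |I_A| + 2 D\<close>, where \<open>D\<close> counts these
  overlaps, and few isolated rows force \<open>D > r |J1| / 8\<close>. Given the earlier columns each overlap is
  hypergeometric with mean at most \<open>q = |J2| bnorm_inf\<^sup>2 / m1\<close>, so \<open>E \<lambda>^D \<le> exp (|L| (\<lambda> - 1) q)\<close>,
  and Markov's inequality with \<open>\<lambda> = r / (8 q)\<close> gives the bound, even with constant 1.\<close>

lemma binomial_diff_mult_power_le:
  "r \<le> b \<Longrightarrow> b \<le> m \<Longrightarrow>
   real ((m - r) choose (b - r)) * real m ^ r \<le> real (m choose b) * real b ^ r"
proof (induction r arbitrary: m b)
  case 0 then show ?case by simp
next
  case (Suc r)
  obtain b' where b: "b = Suc b'" using Suc.prems by (cases b) auto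
  obtain m' where m: "m = Suc m'" using Suc.prems by (cases m) auto
  have rb: "r \<le> b'" "b' \<le> m'" using Suc.prems b m by auto
  have IH: "real ((m' - r) choose (b' - r)) * real m' ^ r \<le> real (m' choose b') * real b' ^ r"
    using Suc.IH rb by blast
  have absorb: "real (m choose b) * real b = real m * real (m' choose b')"
    unfolding b m by (metis Suc_times_binomial_eq mult.commute of_nat_mult)
  have shift: "(m - Suc r) choose (b - Suc r) = (m' - r) choose (b' - r)" using b m by simp
  show ?case
  proof (cases "b' = 0")
    case True
    then show ?thesis using absorb rb b shift by simp
  next
    case False
    define Z where "Z = real ((m' - r) choose (b' - r))"
    have "0 \<le> Z" unfolding Z_def by simp
    have "real m * real b' \<le> real b * real m'" using rb b m by (simp add: algebra_simps)
    then have "(real m * real b') ^ r \<le> (real b * real m') ^ r"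
      by (intro power_mono) auto
    then have "Z * real m ^ r * real b' ^ r \<le> Z * real m' ^ r * real b ^ r"
      using \<open>0 \<le> Z\<close> by (simp add: power_mult_distrib mult_left_mono mult.commute mult.left_commute)
    also have "\<dots> \<le> real (m' choose b') * real b' ^ r * real b ^ r"
      using IH \<open>0 \<le> Z\<close> unfolding Z_def by (intro mult_right_mono) auto
    finally have "Z * real m ^ r \<le> real (m' choose b') * real b ^ r"
      using False by (simp add: mult_ac mult_le_cancel_right)
    then have "real m * (Z * real m ^ r) \<le> real m * (real (m' choose b') * real b ^ r)"
      by (intro mult_left_mono) auto
    then have "Z * real m ^ Suc r \<le> real m * (real (m' choose b') * real b ^ r)"
      by (simp add: mult_ac)
    also have "\<dots> = real (m choose b) * real b ^ Suc r" using absorb by (simp add: mult_ac)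
    finally show ?thesis using shift unfolding Z_def by simp
  qed
qed

lemma card_supersets_eq:
  assumes "finite M" "R \<subseteq> M" "card R \<le> b"
  shows "card {X. X \<subseteq> M \<and> card X = b \<and> R \<subseteq> X} = (card M - card R) choose (b - card R)"
proof -
  have fR: "finite R" using assms finite_subset by blast
  have "bij_betw (\<lambda>X. X - R) {X. X \<subseteq> M \<and> card X = b \<and> R \<subseteq> X}
          {Y. Y \<subseteq> M - R \<and> card Y = b - card R}"
  proof (rule bij_betw_byWitness[where f'="\<lambda>Y. Y \<union> R"])
    show "(\<lambda>Y. Y \<union> R) ` {Y. Y \<subseteq> M - R \<and> card Y = b - card R}
            \<subseteq> {X. X \<subseteq> M \<and> card X = b \<and> R \<subseteq> X}"
    proof clarify
      fix Y assume Y: "Y \<subseteq> M - R" "card Y = b - card R"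
      have "finite Y" using Y assms finite_subset by blast
      then have "card (Y \<union> R) = card Y + card R" using Y fR by (subst card_Un_disjoint) auto
      then show "Y \<union> R \<subseteq> M \<and> card (Y \<union> R) = b \<and> R \<subseteq> Y \<union> R" using Y assms by auto
    qed
  qed (use fR in \<open>auto simp: card_Diff_subset\<close>)
  then have "card {X. X \<subseteq> M \<and> card X = b \<and> R \<subseteq> X} = card {Y. Y \<subseteq> M - R \<and> card Y = b - card R}"
    by (rule bij_betw_same_card)
  also have "\<dots> = card (M - R) choose (b - card R)" using assms by (intro n_subsets) auto
  finally show ?thesis using assms fR by (simp add: card_Diff_subset)
qed

lemma card_supersets_le:
  assumes "R \<subseteq> {..<m}" "b \<le> m"
  shows "real (card {X. X \<subseteq> {..<m} \<and> card X = b \<and> R \<subseteq> X})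
           \<le> real (m choose b) * (real b / real m) ^ card R"
proof (cases "card R \<le> b")
  case True
  have "real (card {X. X \<subseteq> {..<m} \<and> card X = b \<and> R \<subseteq> X}) = real ((m - card R) choose (b - card R))"
    using card_supersets_eq[of "{..<m}" R b] True assms by simp
  also have "\<dots> \<le> real (m choose b) * (real b / real m) ^ card R"
  proof (cases "m = 0")
    case True then show ?thesis using assms \<open>card R \<le> b\<close> by simp
  next
    case False
    then show ?thesis
      using binomial_diff_mult_power_le[OF \<open>card R \<le> b\<close> \<open>b \<le> m\<close>]
      by (simp add: power_divide field_simps)
  qed
  finally show ?thesis .
next
  case False
  then have "{X. X \<subseteq> {..<m} \<and> card X = b \<and> R \<subseteq> X} = {}"
    using card_mono[of _ R] by (auto dest: finite_subset)
  then show ?thesis by (simp only: card.empty of_nat_0) simp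
qed

lemma power_card_eq_sum_Pow:
  fixes y :: real
  assumes "finite Y"
  shows "(1 + y) ^ card Y = (\<Sum>R\<in>Pow Y. y ^ card R)"
  using prod_add[OF assms, of "\<lambda>_. y" "\<lambda>_. 1"] by (simp add: add.commute)

text \<open>The moment generating function of the hypergeometric variable \<open>|X \<inter> V|\<close>, \<open>X\<close> a uniform
  \<open>b\<close>-subset of \<open>{..<m}\<close>: expanding \<open>\<lambda> ^ |X \<inter> V| = \<Sum>R \<subseteq> X \<inter> V. (\<lambda> - 1) ^ |R|\<close> and swapping
  the sums leaves the probability that \<open>X \<supseteq> R\<close>, which is at most \<open>(b/m) ^ |R|\<close>.\<close>

lemma sum_power_card_Int_le:
  fixes lam :: real
  assumes "b \<le> m" "m > 0" "lam \<ge> 1"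
  shows "(\<Sum>X \<in> {X. X \<subseteq> {..<m} \<and> card X = b}. lam ^ card (X \<inter> V))
         \<le> real (m choose b) * exp ((lam - 1) * real b * real (card (V \<inter> {..<m})) / real m)"
proof -
  define W where "W = V \<inter> {..<m}"
  define F where "F = {X. X \<subseteq> {..<m} \<and> card X = b}"
  define h where "h = (\<lambda>R::nat set. (lam - 1) ^ card R)"
  have fW: "finite W" unfolding W_def by simp
  have fF: "finite F" unfolding F_def by (rule finite_subset[of _ "Pow {..<m}"]) auto
  have "(\<Sum>X\<in>F. lam ^ card (X \<inter> V)) = (\<Sum>X\<in>F. \<Sum>R\<in>{R. R \<in> Pow W \<and> R \<subseteq> X}. h R)"
  proof (rule sum.cong[OF refl])
    fix X assume "X \<in> F"
    then have "X \<inter> V = X \<inter> W" unfolding F_def W_def by auto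
    then have "lam ^ card (X \<inter> V) = (\<Sum>R\<in>Pow (X \<inter> W). h R)"
      unfolding h_def using power_card_eq_sum_Pow[of "X \<inter> W" "lam - 1"] fW by simp
    also have "Pow (X \<inter> W) = {R. R \<in> Pow W \<and> R \<subseteq> X}" by auto
    finally show "lam ^ card (X \<inter> V) = (\<Sum>R\<in>{R. R \<in> Pow W \<and> R \<subseteq> X}. h R)" .
  qed
  also have "\<dots> = (\<Sum>R\<in>Pow W. h R * real (card {X. X \<subseteq> {..<m} \<and> card X = b \<and> R \<subseteq> X}))"
    unfolding sum.swap_restrict[OF fF finite_Pow_iff[THEN iffD2, OF fW]]
    by (intro sum.cong refl) (simp add: F_def conj_assoc)
  also have "\<dots> \<le> (\<Sum>R\<in>Pow W. h R * (real (m choose b) * (real b / real m) ^ card R))"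
    using assms card_supersets_le[of _ m b] unfolding h_def W_def
    by (intro sum_mono mult_left_mono) auto
  also have "\<dots> = real (m choose b) * (1 + (lam - 1) * (real b / real m)) ^ card W"
    unfolding h_def power_card_eq_sum_Pow[OF fW] sum_distrib_left
    by (intro sum.cong refl) (simp add: power_mult_distrib[symmetric] mult_ac)
  also have "\<dots> \<le> real (m choose b) * exp ((lam - 1) * (real b / real m)) ^ card W"
    using assms by (intro mult_left_mono power_mono) auto
  also have "\<dots> = real (m choose b) * exp ((lam - 1) * real b * real (card W) / real m)"
    by (simp add: exp_of_nat_mult[symmetric] mult_ac)
  finally show ?thesis unfolding F_def W_def .
qed

lemma sum_PiE_split:
  assumes "finite A" "c \<in> A"
  shows "(\<Sum>S\<in>PiE A T. f S) = (\<Sum>g\<in>PiE (A - {c}) T. \<Sum>y\<in>T c. f (g(c := y)))"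
proof -
  have A: "A = insert c (A - {c})" using assms by auto
  have "PiE A T = (\<lambda>(y, g). g(c := y)) ` (T c \<times> PiE (A - {c}) T)"
    by (subst A, rule PiE_insert_eq)
  moreover have "inj_on (\<lambda>(y, g). g(c := y)) (T c \<times> PiE (A - {c}) T)"
    by (rule inj_combinator) simp
  ultimately have "(\<Sum>S\<in>PiE A T. f S) = (\<Sum>(y, g)\<in>T c \<times> PiE (A - {c}) T. f (g(c := y)))"
    by (simp add: sum.reindex case_prod_unfold)
  also have "\<dots> = (\<Sum>g\<in>PiE (A - {c}) T. \<Sum>y\<in>T c. f (g(c := y)))"
    by (subst sum.cartesian_product[symmetric]) (rule sum.swap)
  finally show ?thesis .
qed

definition supp_configs :: "nat \<Rightarrow> nat set \<Rightarrow> (nat \<Rightarrow> nat) \<Rightarrow> (nat \<Rightarrow> nat set) set" where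
  "supp_configs m A b = PiE A (\<lambda>j. {X. X \<subseteq> {..<m} \<and> card X = b j})"

text \<open>The columns of \<open>L\<close> are revealed in increasing order, after all columns of \<open>J - L\<close>.\<close>

definition earlier_supps :: "nat set \<Rightarrow> nat set \<Rightarrow> (nat \<Rightarrow> nat set) \<Rightarrow> nat \<Rightarrow> nat set" where
  "earlier_supps J L S j = (\<Union>j'\<in>{j'\<in>J. j' \<noteq> j \<and> (j' \<notin> L \<or> j' < j)}. S j')"

definition overlap :: "nat set \<Rightarrow> nat set \<Rightarrow> nat set \<Rightarrow> (nat \<Rightarrow> nat set) \<Rightarrow> nat" where
  "overlap J L K S = (\<Sum>j\<in>K. card (S j \<inter> earlier_supps J L S j))"

lemma finite_supp_configs: "finite A \<Longrightarrow> finite (supp_configs m A b)"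
  unfolding supp_configs_def by (intro finite_PiE) (auto intro: finite_subset[of _ "Pow {..<m}"])

lemma supp_configsD:
  "S \<in> supp_configs m A b \<Longrightarrow> j \<in> A \<Longrightarrow> S j \<subseteq> {..<m} \<and> card (S j) = b j"
  unfolding supp_configs_def by (auto simp: PiE_iff)

lemma earlier_supps_upd_self: "earlier_supps J L (S(c := y)) c = earlier_supps J L S c"
  unfolding earlier_supps_def by (intro SUP_cong refl) simp

lemma overlap_upd_later:
  assumes "c \<in> L" "\<forall>a\<in>K. a < c"
  shows "overlap J L K (S(c := y)) = overlap J L K S"
  unfolding overlap_def
proof (intro sum.cong refl)
  fix j assume j: "j \<in> K"
  then have "j < c" using assms by auto
  moreover have "earlier_supps J L (S(c := y)) j = earlier_supps J L S j"
    unfolding earlier_supps_def using assms j by (intro SUP_cong refl) auto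
  ultimately show "card ((S(c := y)) j \<inter> earlier_supps J L (S(c := y)) j)
                   = card (S j \<inter> earlier_supps J L S j)"
    by simp
qed

text \<open>Revealing the column \<open>c\<close> last among \<open>insert c K\<close>: the other overlaps do not depend on \<open>S c\<close>,
  and the new one is hypergeometric given the earlier columns.\<close>

lemma sum_power_overlap_insert_le:
  fixes lam q :: real
  assumes fA: "finite A" and J: "J \<subseteq> A" "L \<subseteq> J" and bm: "\<forall>j\<in>A. b j \<le> m" and "m > 0"
    and lam: "lam \<ge> 1"
    and q: "\<And>S c. S \<in> supp_configs m A b \<Longrightarrow> c \<in> L \<Longrightarrow>
              real (b c) * real (card (earlier_supps J L S c \<inter> {..<m})) / real m \<le> q"
    and fK: "finite K" and cL: "c \<in> L" and later: "\<forall>a\<in>K. a < c"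
  shows "(\<Sum>S\<in>supp_configs m A b. lam ^ overlap J L (insert c K) S)
           \<le> exp ((lam - 1) * q) * (\<Sum>S\<in>supp_configs m A b. lam ^ overlap J L K S)"
proof -
  define F where "F = (\<lambda>j. {X. X \<subseteq> {..<m} \<and> card X = b j})"
  define G where "G = PiE (A - {c}) F"
  have configs: "supp_configs m A b = PiE A F" unfolding supp_configs_def F_def ..
  have cA: "c \<in> A" using cL J by auto
  have cardF: "card (F c) = m choose b c" unfolding F_def using n_subsets[of "{..<m}" "b c"] by simp
  have "{..<b c} \<in> F c" unfolding F_def using bm cA by auto
  then obtain y0 where y0: "y0 \<in> F c" by blast
  let ?V = "\<lambda>g. earlier_supps J L (g(c := y0)) c"
  have split: "lam ^ overlap J L (insert c K) (g(c := y))
                 = lam ^ overlap J L K (g(c := y0)) * lam ^ card (y \<inter> ?V g)" for g y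
  proof -
    have "overlap J L (insert c K) (g(c := y)) = overlap J L K (g(c := y)) + card (y \<inter> ?V g)"
      unfolding overlap_def using later fK earlier_supps_upd_self[of J L g c] by auto
    then show ?thesis
      using overlap_upd_later[OF cL later] by (simp add: power_add)
  qed
  have col: "(\<Sum>y\<in>F c. lam ^ card (y \<inter> ?V g)) \<le> real (m choose b c) * exp ((lam - 1) * q)"
    if g: "g \<in> G" for g
  proof -
    have "g(c := y0) \<in> supp_configs m A b"
      using PiE_fun_upd[of y0 F c g "A - {c}", OF y0] g cA unfolding configs G_def by (simp add: insert_absorb)
    then have "(lam - 1) * (real (b c) * real (card (?V g \<inter> {..<m})) / real m) \<le> (lam - 1) * q"
      using q cL lam by (intro mult_left_mono) auto
    then have "exp ((lam - 1) * real (b c) * real (card (?V g \<inter> {..<m})) / real m) \<le> exp ((lam - 1) * q)"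
      by (simp add: mult.assoc)
    then show ?thesis
      using sum_power_card_Int_le[of "b c" m lam "?V g"] bm cA \<open>m > 0\<close> lam
      unfolding F_def by (meson mult_left_mono of_nat_0_le_iff order_trans)
  qed
  have "(\<Sum>S\<in>supp_configs m A b. lam ^ overlap J L (insert c K) S)
      = (\<Sum>g\<in>G. lam ^ overlap J L K (g(c := y0)) * (\<Sum>y\<in>F c. lam ^ card (y \<inter> ?V g)))"
    unfolding configs G_def sum_PiE_split[OF fA cA] split sum_distrib_left ..
  also have "\<dots> \<le> (\<Sum>g\<in>G. lam ^ overlap J L K (g(c := y0)) * (real (m choose b c) * exp ((lam - 1) * q)))"
    using col lam by (intro sum_mono mult_left_mono) auto
  also have "\<dots> = exp ((lam - 1) * q) * (\<Sum>g\<in>G. \<Sum>y\<in>F c. lam ^ overlap J L K (g(c := y)))"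
    unfolding sum_distrib_left
    by (intro sum.cong refl) (simp add: overlap_upd_later[OF cL later] cardF mult_ac)
  also have "\<dots> = exp ((lam - 1) * q) * (\<Sum>S\<in>supp_configs m A b. lam ^ overlap J L K S)"
    unfolding configs G_def sum_PiE_split[OF fA cA] ..
  finally show ?thesis .
qed

lemma sum_power_overlap_le:
  fixes lam q :: real
  assumes "finite A" "J \<subseteq> A" "L \<subseteq> J" "\<forall>j\<in>A. b j \<le> m" "m > 0" "lam \<ge> 1"
    and "\<And>S c. S \<in> supp_configs m A b \<Longrightarrow> c \<in> L \<Longrightarrow>
           real (b c) * real (card (earlier_supps J L S c \<inter> {..<m})) / real m \<le> q"
    and "finite K" "K \<subseteq> L"
  shows "(\<Sum>S\<in>supp_configs m A b. lam ^ overlap J L K S)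
           \<le> exp (real (card K) * (lam - 1) * q) * real (card (supp_configs m A b))"
  using \<open>finite K\<close> \<open>K \<subseteq> L\<close>
proof (induction K rule: finite_linorder_max_induct)
  case empty
  then show ?case by (simp add: overlap_def)
next
  case (insert c K)
  have "(\<Sum>S\<in>supp_configs m A b. lam ^ overlap J L (insert c K) S)
          \<le> exp ((lam - 1) * q) * (\<Sum>S\<in>supp_configs m A b. lam ^ overlap J L K S)"
    using insert assms by (intro sum_power_overlap_insert_le) auto
  also have "\<dots> \<le> exp ((lam - 1) * q) * (exp (real (card K) * (lam - 1) * q) * real (card (supp_configs m A b)))"
    using insert by (intro mult_left_mono) auto
  also have "\<dots> = exp (real (card (insert c K)) * (lam - 1) * q) * real (card (supp_configs m A b))"
  proof -
    have "card (insert c K) = Suc (card K)" using insert by (intro card_insert_disjoint) auto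
    then show ?thesis by (simp add: exp_add[symmetric] algebra_simps)
  qed
  finally show ?case .
qed

lemma isolated_row_if_unique_col:
  assumes C: "{j\<in>L. i \<in> S j} = {j0}" and "j0 \<in> J1" "J1 \<subseteq> J2"
    and no_overlap: "i \<notin> earlier_supps J2 L S j0"
  shows "\<exists>j0\<in>J1. i \<in> S j0 \<and> (\<forall>j\<in>J2 - {j0}. i \<notin> S j)"
proof (intro bexI[of _ j0] conjI ballI notI)
  show "i \<in> S j0" using C by auto
  fix j assume j: "j \<in> J2 - {j0}" "i \<in> S j"
  then have "j \<notin> L" using C by auto
  then have "i \<in> earlier_supps J2 L S j0" using j unfolding earlier_supps_def by auto
  then show False using no_overlap by simp
qed (rule \<open>j0 \<in> J1\<close>)

lemma card_cols_containing_row_le: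
  assumes fL: "finite L" and "L \<subseteq> J1" "J1 \<subseteq> J2"
  shows "card {j\<in>L. i \<in> S j}
           \<le> of_bool (\<exists>j0\<in>J1. i \<in> S j0 \<and> (\<forall>j\<in>J2 - {j0}. i \<notin> S j))
             + 2 * card {j\<in>L. i \<in> S j \<inter> earlier_supps J2 L S j}"
proof -
  define C where "C = {j\<in>L. i \<in> S j}"
  define C' where "C' = {j\<in>L. i \<in> S j \<inter> earlier_supps J2 L S j}"
  have fC: "finite C" "finite C'" using fL unfolding C_def C'_def by simp_all
  show ?thesis
  proof (cases "C = {}")
    case True then show ?thesis by (simp add: C_def[symmetric])
  next
    case False
    define j0 where "j0 = Min C"
    have j0C: "j0 \<in> C" using False fC unfolding j0_def by simp
    have "C - {j0} \<subseteq> C'"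
    proof
      fix j assume j: "j \<in> C - {j0}"
      then have "j0 < j" using fC unfolding j0_def by (simp add: order.not_eq_order_implies_strict)
      moreover have "j0 \<in> J2" "j0 \<in> L" "i \<in> S j0" using j0C assms unfolding C_def by auto
      ultimately show "j \<in> C'" using j unfolding C_def C'_def earlier_supps_def by auto
    qed
    then have "card (C - {j0}) \<le> card C'" by (rule card_mono[OF fC(2)])
    then have "card C - 1 \<le> card C'" using card_Diff_singleton[OF j0C] by simp
    moreover have "card C \<noteq> 0" using False fC by simp
    ultimately consider "card C \<ge> 2" | "C = {j0}" "j0 \<in> C'" | "C = {j0}" "j0 \<notin> C'"
    proof (cases "card C \<ge> 2")
      case False
      then have "card C = 1" using \<open>card C \<noteq> 0\<close> by linarith
      then obtain x where "C = {x}" by (rule card_1_singletonE)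
      then show ?thesis using that j0C by blast
    qed simp
    then show ?thesis
    proof cases
      case 1 with \<open>card C - 1 \<le> card C'\<close> show ?thesis unfolding C_def C'_def by simp
    next
      case 2
      then have "card C' \<ge> 1" using fC by (metis One_nat_def Suc_leI card_gt_0_iff empty_iff)
      with 2 show ?thesis unfolding C_def C'_def by simp
    next
      case 3
      have "j0 \<in> J1" "i \<in> S j0" using j0C assms unfolding C_def by auto
      then have "\<exists>j0\<in>J1. i \<in> S j0 \<and> (\<forall>j\<in>J2 - {j0}. i \<notin> S j)"
        using 3 j0C \<open>J1 \<subseteq> J2\<close> unfolding C_def C'_def by (intro isolated_row_if_unique_col) auto
      with 3 show ?thesis unfolding C_def by simp
    qed
  qed
qed

lemma sum_card_le_isolated_plus_overlap:
  assumes fL: "finite L" and LJ: "L \<subseteq> J1" "J1 \<subseteq> J2" and S: "\<forall>j\<in>L. S j \<subseteq> {..<m}"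
  shows "(\<Sum>j\<in>L. card (S j))
           \<le> card {i\<in>{..<m}. \<exists>j0\<in>J1. i \<in> S j0 \<and> (\<forall>j\<in>J2 - {j0}. i \<notin> S j)}
             + 2 * overlap J2 L L S"
proof -
  let ?V = "earlier_supps J2 L S"
  have rows: "{i\<in>{..<m}. i \<in> S j} = S j" "{i\<in>{..<m}. i \<in> S j \<inter> ?V j} = S j \<inter> ?V j"
    if "j \<in> L" for j
    using S that by auto
  have "(\<Sum>j\<in>L. card (S j)) = (\<Sum>i<m. card {j\<in>L. i \<in> S j})"
    using sum_multicount_gen[of "{..<m}" L "\<lambda>i j. i \<in> S j" "\<lambda>j. card (S j)"] fL rows by simp
  also have "\<dots> \<le> (\<Sum>i<m. of_bool (\<exists>j0\<in>J1. i \<in> S j0 \<and> (\<forall>j\<in>J2 - {j0}. i \<notin> S j))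
                        + 2 * card {j\<in>L. i \<in> S j \<inter> ?V j})"
    by (intro sum_mono card_cols_containing_row_le[OF fL LJ])
  also have "\<dots> = card {i\<in>{..<m}. \<exists>j0\<in>J1. i \<in> S j0 \<and> (\<forall>j\<in>J2 - {j0}. i \<notin> S j)}
                  + 2 * (\<Sum>i<m. card {j\<in>L. i \<in> S j \<inter> ?V j})"
    by (simp add: sum.distrib sum_distrib_left[symmetric] Int_def)
  also have "(\<Sum>i<m. card {j\<in>L. i \<in> S j \<inter> ?V j}) = overlap J2 L L S"
    using sum_multicount_gen[of "{..<m}" L "\<lambda>i j. i \<in> S j \<inter> ?V j" "\<lambda>j. card (S j \<inter> ?V j)"] fL rows
    unfolding overlap_def by simp
  finally show ?thesis .
qed

definition matrix_of_supps :: "nat \<Rightarrow> nat \<Rightarrow> (nat \<Rightarrow> nat set) \<Rightarrow> nat \<times> nat \<Rightarrow> bool" where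
  "matrix_of_supps m1 m2 S = (\<lambda>(i, j). i < m1 \<and> j < m2 \<and> i \<in> S j)"

lemma overlap_gt_if_few_isolated:
  assumes S: "S \<in> supp_configs m1 {..<m2} b" and J: "J1 \<subseteq> J2" "J2 \<subseteq> {..<m2}" and "r > 0"
    and L: "L = {j \<in> J1. r \<le> real (b j)}" "real (card J1) / 2 \<le> real (card L)"
    and few: "real (card (I_A m1 (matrix_of_supps m1 m2 S) J1 J2)) < real (card J1) * r / 4"
  shows "real (card J1) * r / 8 < real (overlap J2 L L S)"
proof -
  have fL: "finite L" using J L(1) finite_subset[of L "{..<m2}"] by auto
  have LJ: "L \<subseteq> J1" using L by auto
  have supp: "S j \<subseteq> {..<m1} \<and> card (S j) = b j" if "j \<in> J2" for j
    using supp_configsD[OF S] J that by auto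
  have "I_A m1 (matrix_of_supps m1 m2 S) J1 J2
          = {i\<in>{..<m1}. \<exists>j0\<in>J1. i \<in> S j0 \<and> (\<forall>j\<in>J2 - {j0}. i \<notin> S j)}"
    unfolding I_A_def matrix_of_supps_def using J by auto
  then have "(\<Sum>j\<in>L. card (S j)) \<le> card (I_A m1 (matrix_of_supps m1 m2 S) J1 J2) + 2 * overlap J2 L L S"
    using sum_card_le_isolated_plus_overlap[OF fL LJ J(1), of S m1] supp LJ J by auto
  then have "real (\<Sum>j\<in>L. card (S j))
               \<le> real (card (I_A m1 (matrix_of_supps m1 m2 S) J1 J2) + 2 * overlap J2 L L S)"
    by (rule of_nat_mono)
  then have "(\<Sum>j\<in>L. real (card (S j)))
               \<le> real (card (I_A m1 (matrix_of_supps m1 m2 S) J1 J2)) + 2 * real (overlap J2 L L S)"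
    by simp
  moreover have "real (card L) * r \<le> (\<Sum>j\<in>L. real (card (S j)))"
  proof -
    have "(\<Sum>j\<in>L. r) \<le> (\<Sum>j\<in>L. real (card (S j)))"
      using supp L(1) J by (intro sum_mono) auto
    then show ?thesis by simp
  qed
  moreover have "real (card J1) * r / 2 \<le> real (card L) * r"
    using L(2) \<open>r > 0\<close> by (simp add: field_simps mult_right_mono)
  ultimately show ?thesis using few by linarith
qed

lemma col_supp_matrix_of_supps:
  "j < m2 \<Longrightarrow> S j \<subseteq> {..<m1} \<Longrightarrow> col_supp m1 (matrix_of_supps m1 m2 S) j = S j"
  unfolding col_supp_def matrix_of_supps_def by auto

lemma bij_betw_matrix_of_supps:
  "bij_betw (matrix_of_supps m1 m2) (supp_configs m1 {..<m2} b)
     (Omega_b m1 m2 b \<inter> {A. \<forall>x. x \<notin> {..<m1} \<times> {..<m2} \<longrightarrow> A x = False})"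
proof (rule bij_betw_imageI)
  let ?PS = "supp_configs m1 {..<m2} b"
  have col: "col_supp m1 (matrix_of_supps m1 m2 S) j = S j" if "S \<in> ?PS" "j < m2" for S j
    using col_supp_matrix_of_supps supp_configsD[OF that(1)] that(2) by auto
  show "inj_on (matrix_of_supps m1 m2) ?PS"
  proof
    fix S S' assume S: "S \<in> ?PS" and S': "S' \<in> ?PS"
      and eq: "matrix_of_supps m1 m2 S = matrix_of_supps m1 m2 S'"
    show "S = S'"
    proof (rule PiE_ext[OF S[unfolded supp_configs_def] S'[unfolded supp_configs_def]])
      fix j assume "j \<in> {..<m2}"
      then show "S j = S' j" using col[OF S] col[OF S'] eq by (metis lessThan_iff)
    qed
  qed
  show "matrix_of_supps m1 m2 ` ?PS
          = Omega_b m1 m2 b \<inter> {A. \<forall>x. x \<notin> {..<m1} \<times> {..<m2} \<longrightarrow> A x = False}"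
  proof (intro equalityI subsetI)
    fix A assume "A \<in> matrix_of_supps m1 m2 ` ?PS"
    then obtain S where S: "S \<in> ?PS" and A: "A = matrix_of_supps m1 m2 S" by blast
    show "A \<in> Omega_b m1 m2 b \<inter> {A. \<forall>x. x \<notin> {..<m1} \<times> {..<m2} \<longrightarrow> A x = False}"
      using col[OF S] supp_configsD[OF S] unfolding A Omega_b_def by (auto simp: matrix_of_supps_def)
  next
    fix A assume A: "A \<in> Omega_b m1 m2 b \<inter> {A. \<forall>x. x \<notin> {..<m1} \<times> {..<m2} \<longrightarrow> A x = False}"
    define S where "S = restrict (col_supp m1 A) {..<m2}"
    have "S \<in> ?PS" unfolding S_def supp_configs_def using A
      by (auto simp: Omega_b_def col_supp_def)
    moreover have "matrix_of_supps m1 m2 S = A"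
    proof
      fix x :: "nat \<times> nat"
      show "matrix_of_supps m1 m2 S x = A x"
        using A unfolding S_def matrix_of_supps_def col_supp_def by (cases x) auto
    qed
    ultimately show "A \<in> matrix_of_supps m1 m2 ` ?PS" by blast
  qed
qed

lemma prod_if_mem_eq_power:
  fixes p :: real
  assumes "X \<subseteq> {..<m}"
  shows "(\<Prod>i<m. if i \<in> X then p else 1 - p) = p ^ card X * (1 - p) ^ (m - card X)"
proof -
  have "(\<Prod>i<m. if i \<in> X then p else 1 - p) = (\<Prod>i\<in>X. p) * (\<Prod>i\<in>{..<m} - X. 1 - p)"
    using prod.If_cases[of "{..<m}" "\<lambda>i. i \<in> X" "\<lambda>_. p" "\<lambda>_. 1 - p"] assms
    by (simp add: Int_absorb1 Diff_eq)
  then show ?thesis using assms by (simp add: card_Diff_subset finite_subset)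
qed

lemma pmf_bern_matrix_matrix_of_supps:
  assumes "0 \<le> p" "p \<le> 1" and S: "S \<in> supp_configs m1 {..<m2} b"
  shows "pmf (bern_matrix m1 m2 p) (matrix_of_supps m1 m2 S) = (\<Prod>j<m2. p ^ b j * (1 - p) ^ (m1 - b j))"
proof -
  let ?A = "matrix_of_supps m1 m2 S"
  have "pmf (bern_matrix m1 m2 p) ?A = (\<Prod>x\<in>{..<m1} \<times> {..<m2}. pmf (bernoulli_pmf p) (?A x))"
    unfolding bern_matrix_def by (subst pmf_Pi) (auto simp: matrix_of_supps_def)
  also have "\<dots> = (\<Prod>i<m1. \<Prod>j<m2. pmf (bernoulli_pmf p) (?A (i, j)))"
    by (simp add: prod.cartesian_product)
  also have "\<dots> = (\<Prod>j<m2. \<Prod>i<m1. pmf (bernoulli_pmf p) (?A (i, j)))"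
    by (rule prod.swap)
  also have "\<dots> = (\<Prod>j<m2. \<Prod>i<m1. if i \<in> S j then p else 1 - p)"
    using assms by (intro prod.cong refl) (simp add: matrix_of_supps_def)
  also have "\<dots> = (\<Prod>j<m2. p ^ b j * (1 - p) ^ (m1 - b j))"
    using supp_configsD[OF S] by (intro prod.cong refl) (simp add: prod_if_mem_eq_power)
  finally show ?thesis .
qed

lemma prob_bern_matrix_Int_Omega_b:
  assumes "0 \<le> p" "p \<le> 1"
  shows "measure_pmf.prob (bern_matrix m1 m2 p) (Y \<inter> Omega_b m1 m2 b)
           = (\<Prod>j<m2. p ^ b j * (1 - p) ^ (m1 - b j))
             * real (card {S \<in> supp_configs m1 {..<m2} b. matrix_of_supps m1 m2 S \<in> Y})"
proof -
  let ?P = "bern_matrix m1 m2 p"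
  let ?Z = "{A. \<forall>x. x \<notin> {..<m1} \<times> {..<m2} \<longrightarrow> A x = False}"
  define Q where "Q = {S \<in> supp_configs m1 {..<m2} b. matrix_of_supps m1 m2 S \<in> Y}"
  have bij: "bij_betw (matrix_of_supps m1 m2) Q (Y \<inter> (Omega_b m1 m2 b \<inter> ?Z))"
  proof -
    have "Q \<subseteq> supp_configs m1 {..<m2} b" unfolding Q_def by auto
    then have "inj_on (matrix_of_supps m1 m2) Q"
      by (rule inj_on_subset[OF bij_betw_imp_inj_on[OF bij_betw_matrix_of_supps]])
    moreover have "matrix_of_supps m1 m2 ` Q = Y \<inter> matrix_of_supps m1 m2 ` supp_configs m1 {..<m2} b"
      unfolding Q_def by auto
    ultimately show ?thesis
      unfolding bij_betw_imp_surj_on[OF bij_betw_matrix_of_supps] by (simp add: bij_betw_def)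
  qed
  have "set_pmf ?P \<subseteq> ?Z"
    unfolding bern_matrix_def by (rule set_Pi_pmf_subset) simp
  then have "measure_pmf.prob ?P (Y \<inter> Omega_b m1 m2 b) = measure_pmf.prob ?P (Y \<inter> (Omega_b m1 m2 b \<inter> ?Z))"
    by (metis (no_types, lifting) Int_assoc inf.absorb_iff2 measure_Int_set_pmf)
  also have "\<dots> = (\<Sum>A\<in>matrix_of_supps m1 m2 ` Q. pmf ?P A)"
  proof -
    have "finite Q" using finite_supp_configs[of "{..<m2}" m1 b] unfolding Q_def by simp
    then show ?thesis
      unfolding bij_betw_imp_surj_on[OF bij, symmetric] by (intro measure_measure_pmf_finite finite_imageI)
  qed
  also have "\<dots> = (\<Sum>S\<in>Q. pmf ?P (matrix_of_supps m1 m2 S))"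
    using sum.reindex[OF bij_betw_imp_inj_on[OF bij], of "pmf ?P"] by simp
  also have "\<dots> = (\<Sum>S\<in>Q. \<Prod>j<m2. p ^ b j * (1 - p) ^ (m1 - b j))"
    using assms by (intro sum.cong refl) (simp add: Q_def pmf_bern_matrix_matrix_of_supps)
  finally show ?thesis unfolding Q_def by simp
qed

lemma cond_prob_Omega_b_eq_card_ratio:
  assumes "0 < p" "p < 1"
  shows "cond_prob (bern_matrix m1 m2 p) Y (Omega_b m1 m2 b)
           = real (card {S \<in> supp_configs m1 {..<m2} b. matrix_of_supps m1 m2 S \<in> Y})
             / real (card (supp_configs m1 {..<m2} b))"
proof -
  have "(\<Prod>j<m2. p ^ b j * (1 - p) ^ (m1 - b j)) > 0" using assms by (intro prod_pos) auto
  then show ?thesis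
    using prob_bern_matrix_Int_Omega_b[of p m1 m2 Y b] prob_bern_matrix_Int_Omega_b[of p m1 m2 UNIV b]
      assms unfolding cond_prob_def by simp
qed

lemma card_gt_le_sum_power_div_powr:
  fixes f :: "'a \<Rightarrow> nat" and lam t :: real
  assumes "finite A" "lam \<ge> 1"
  shows "real (card {x\<in>A. t < real (f x)}) \<le> (\<Sum>x\<in>A. lam ^ f x) / lam powr t"
proof -
  have "real (card {x\<in>A. t < real (f x)}) = (\<Sum>x\<in>{x\<in>A. t < real (f x)}. 1)" by simp
  also have "\<dots> \<le> (\<Sum>x\<in>{x\<in>A. t < real (f x)}. lam ^ f x / lam powr t)"
  proof (intro sum_mono)
    fix x assume "x \<in> {x\<in>A. t < real (f x)}"
    then have "lam powr t \<le> lam powr real (f x)" using assms by (intro powr_mono) auto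
    then show "1 \<le> lam ^ f x / lam powr t" using assms by (simp add: powr_realpow)
  qed
  also have "\<dots> \<le> (\<Sum>x\<in>A. lam ^ f x / lam powr t)"
    using assms by (intro sum_mono2) auto
  finally show ?thesis by (simp add: sum_divide_distrib)
qed

lemma exp_div_powr_three_mult_le:
  fixes x t :: real
  assumes "x \<ge> 1" "t \<ge> 0"
  shows "exp t / (3 * x) powr t \<le> exp (- ln x * t)"
proof -
  have "1 \<le> ln (3::real)" using exp_le by (subst ln_ge_iff) auto
  then have "t \<le> t * ln 3" using assms by (simp add: mult_left_mono[of 1 "ln 3" t, simplified])
  then have "exp t \<le> 3 powr t" unfolding powr_def by simp
  have "exp t / (3 * x) powr t = exp t / 3 powr t / x powr t" using assms by (simp add: powr_mult)
  also have "\<dots> \<le> 1 / x powr t" using \<open>exp t \<le> 3 powr t\<close> by (intro divide_right_mono) auto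
  also have "\<dots> = exp (- ln x * t)" using assms by (simp add: powr_def exp_minus inverse_eq_divide mult.commute)
  finally show ?thesis .
qed

lemma card_earlier_supps_le:
  assumes S: "S \<in> supp_configs m A b" and "J \<subseteq> A" "finite J"
  shows "card (earlier_supps J L S c) \<le> (\<Sum>j\<in>J. b j)"
proof -
  have "card (earlier_supps J L S c) \<le> (\<Sum>j\<in>{j'\<in>J. j' \<noteq> c \<and> (j' \<notin> L \<or> j' < c)}. card (S j))"
    unfolding earlier_supps_def by (rule card_UN_le) (use \<open>finite J\<close> in simp)
  also have "\<dots> \<le> (\<Sum>j\<in>J. card (S j))" using \<open>finite J\<close> by (intro sum_mono2) auto
  also have "\<dots> = (\<Sum>j\<in>J. b j)" using supp_configsD[OF S] \<open>J \<subseteq> A\<close> by (intro sum.cong) auto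
  finally show ?thesis .
qed

lemma card_large_overlap_le:
  fixes lam q t :: real
  assumes "finite A" "J \<subseteq> A" "L \<subseteq> J" "\<forall>j\<in>A. b j \<le> m" "m > 0" and lam: "lam \<ge> 1"
    and "\<And>S c. S \<in> supp_configs m A b \<Longrightarrow> c \<in> L \<Longrightarrow>
           real (b c) * real (card (earlier_supps J L S c \<inter> {..<m})) / real m \<le> q"
    and "q \<ge> 0" and t: "real (card L) * lam * q \<le> t"
  shows "real (card {S \<in> supp_configs m A b. t < real (overlap J L L S)})
           \<le> exp t / lam powr t * real (card (supp_configs m A b))"
proof -
  have fL: "finite L" using \<open>L \<subseteq> J\<close> \<open>J \<subseteq> A\<close> \<open>finite A\<close> by (meson finite_subset)
  let ?N = "real (card (supp_configs m A b))"
  have "real (card L) * (lam - 1) * q \<le> real (card L) * lam * q"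
    using \<open>q \<ge> 0\<close> by (intro mult_right_mono mult_left_mono) auto
  then have "exp (real (card L) * (lam - 1) * q) * ?N \<le> exp t * ?N"
    using t by (intro mult_right_mono) auto
  then have "(\<Sum>S\<in>supp_configs m A b. lam ^ overlap J L L S) \<le> exp t * ?N"
    using sum_power_overlap_le[OF assms(1-7) fL order_refl] by (rule order_trans[rotated])
  then have "(\<Sum>S\<in>supp_configs m A b. lam ^ overlap J L L S) / lam powr t \<le> exp t / lam powr t * ?N"
    using divide_right_mono[of _ _ "lam powr t"] by simp
  with card_gt_le_sum_power_div_powr[OF finite_supp_configs[OF \<open>finite A\<close>] lam]
  show ?thesis by (rule order_trans)
qed

lemma mean_overlap_le:
  assumes S: "S \<in> supp_configs m1 {..<m2} b" and J: "J \<subseteq> {..<m2}" "c \<in> J"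
    and bm: "\<forall>j<m2. b j \<le> bm"
  shows "real (b c) * real (card (earlier_supps J L S c \<inter> {..<m1})) / real m1
           \<le> real (card J) * real bm ^ 2 / real m1"
proof -
  have fJ: "finite J" using J(1) finite_subset by blast
  have "earlier_supps J L S c \<subseteq> {..<m1}"
    using supp_configsD[OF S] J(1) unfolding earlier_supps_def by blast
  then have "card (earlier_supps J L S c \<inter> {..<m1}) \<le> (\<Sum>j\<in>J. b j)"
    using card_earlier_supps_le[OF S J(1) fJ] by (simp add: Int_absorb2)
  also have "\<dots> \<le> (\<Sum>j\<in>J. bm)" using bm J(1) by (intro sum_mono) auto
  finally have "b c * card (earlier_supps J L S c \<inter> {..<m1}) \<le> bm * (card J * bm)"
    using bm J by (intro mult_le_mono) auto
  then have "real (b c) * real (card (earlier_supps J L S c \<inter> {..<m1})) \<le> real (card J) * real bm ^ 2"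
    by (metis of_nat_le_iff of_nat_mult of_nat_power mult.left_commute power2_eq_square)
  then show ?thesis by (rule divide_right_mono) simp
qed

lemma le_bnorm_inf: "j < m2 \<Longrightarrow> b j \<le> bnorm_inf m2 b"
  unfolding bnorm_inf_def by (intro Max_ge) auto

lemma card_few_isolated_le:
  fixes lam :: real
  assumes bm1: "\<forall>j<m2. b j \<le> m1" and "m1 > 0" and J: "J1 \<subseteq> J2" "J2 \<subseteq> {..<m2}" and "r > 0"
    and many: "real (card J1) / 2 \<le> real (card {j \<in> J1. r \<le> real (b j)})"
    and lam: "lam \<ge> 1" "lam * (real (card J2) * real (bnorm_inf m2 b) ^ 2 / real m1) \<le> r / 8"
  shows "real (card {S \<in> supp_configs m1 {..<m2} b.
                       real (card (I_A m1 (matrix_of_supps m1 m2 S) J1 J2)) < real (card J1) * r / 4})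
           \<le> exp (real (card J1) * r / 8) / lam powr (real (card J1) * r / 8)
             * real (card (supp_configs m1 {..<m2} b))"
proof -
  define L where "L = {j \<in> J1. r \<le> real (b j)}"
  define q where "q = real (card J2) * real (bnorm_inf m2 b) ^ 2 / real m1"
  define t where "t = real (card J1) * r / 8"
  have "{S \<in> supp_configs m1 {..<m2} b.
           real (card (I_A m1 (matrix_of_supps m1 m2 S) J1 J2)) < real (card J1) * r / 4}
          \<subseteq> {S \<in> supp_configs m1 {..<m2} b. t < real (overlap J2 L L S)}"
    using overlap_gt_if_few_isolated[OF _ J \<open>r > 0\<close> L_def] many unfolding t_def L_def by auto
  then have "real (card {S \<in> supp_configs m1 {..<m2} b.
                 real (card (I_A m1 (matrix_of_supps m1 m2 S) J1 J2)) < real (card J1) * r / 4})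
               \<le> real (card {S \<in> supp_configs m1 {..<m2} b. t < real (overlap J2 L L S)})"
    using finite_supp_configs by (intro of_nat_mono card_mono) auto
  also have "\<dots> \<le> exp t / lam powr t * real (card (supp_configs m1 {..<m2} b))"
  proof (rule card_large_overlap_le[where q = q])
    have "card L \<le> card J1"
      unfolding L_def using finite_subset[OF J(1) finite_subset[OF J(2)]] by (intro card_mono) auto
    moreover have "0 \<le> lam * q" using lam unfolding q_def by simp
    ultimately have "real (card L) * (lam * q) \<le> real (card J1) * (r / 8)"
      using lam \<open>r > 0\<close> unfolding q_def by (intro mult_mono) auto
    then show "real (card L) * lam * q \<le> t" unfolding t_def by (simp add: mult.assoc)
    show "L \<subseteq> J2" using J unfolding L_def by auto
    show "real (b c) * real (card (earlier_supps J2 L S c \<inter> {..<m1})) / real m1 \<le> q"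
      if "S \<in> supp_configs m1 {..<m2} b" "c \<in> L" for S c
      using mean_overlap_le[OF that(1) J(2)] le_bnorm_inf that(2) \<open>L \<subseteq> J2\<close> unfolding q_def by blast
    show "0 \<le> q" unfolding q_def by simp
  qed (use bm1 \<open>m1 > 0\<close> lam J in auto)
  finally show ?thesis unfolding t_def .
qed

lemma cond_prob_few_isolated_rows_le:
  assumes p: "0 < p" "p < 1" and bm1: "\<forall>j<m2. b j \<le> m1"
    and J: "J1 \<noteq> {}" "J1 \<subseteq> J2" "J2 \<subseteq> {..<m2}" and "r > 0"
    and many: "real (card J1) / 2 \<le> real (card {j \<in> J1. r \<le> real (b j)})"
    and r: "real (card J2) * (24 * real (bnorm_inf m2 b) ^ 2 / real m1) \<le> r"
  shows "cond_prob (bern_matrix m1 m2 p)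
           {A. real (card (I_A m1 A J1 J2)) < real (card J1) * r / 4} (Omega_b m1 m2 b)
         \<le> exp (- ln (r / (24 * real (card J2) * real (bnorm_inf m2 b) ^ 2 / real m1))
                * r * real (card J1) / 8)"
proof -
  define q where "q = real (card J2) * real (bnorm_inf m2 b) ^ 2 / real m1"
  define x where "x = r / (24 * q)"
  define t where "t = real (card J1) * r / 8"
  have fJ: "finite J2" "finite J1" using finite_subset[OF J(3)] finite_subset[OF J(2)] by auto
  have "{j \<in> J1. r \<le> real (b j)} \<noteq> {}"
  proof
    assume none: "{j \<in> J1. r \<le> real (b j)} = {}"
    have "card J1 = 0" using many unfolding none by simp
    then show False using J(1) fJ(2) by simp
  qed
  then obtain j1 where "j1 \<in> J1" "r \<le> real (b j1)" by blast
  then have "r \<le> real (bnorm_inf m2 b)" "r \<le> real m1" using le_bnorm_inf[of j1 m2 b] bm1 J by force+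
  moreover have "card J2 > 0" using J(1,2) fJ(1) by (auto simp: card_gt_0_iff)
  ultimately have "m1 > 0" "q > 0" using \<open>r > 0\<close> unfolding q_def by auto
  have "24 * q \<le> r" using r unfolding q_def by (simp add: algebra_simps)
  then have "x \<ge> 1" using \<open>q > 0\<close> unfolding x_def by (simp add: le_divide_eq)
  have "3 * x * q = r / 8" using \<open>q > 0\<close> unfolding x_def by (simp add: field_simps)
  then have "cond_prob (bern_matrix m1 m2 p)
               {A. real (card (I_A m1 A J1 J2)) < real (card J1) * r / 4} (Omega_b m1 m2 b)
             \<le> exp t / (3 * x) powr t"
    using card_few_isolated_le[OF bm1 \<open>m1 > 0\<close> J(2,3) \<open>r > 0\<close> many, of "3 * x"] \<open>x \<ge> 1\<close>
    unfolding cond_prob_Omega_b_eq_card_ratio[OF p] t_def q_def by (simp add: divide_le_eq)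
  also have "\<dots> \<le> exp (- ln x * t)"
    using \<open>x \<ge> 1\<close> \<open>r > 0\<close> unfolding t_def by (intro exp_div_powr_three_mult_le) auto
  finally show ?thesis unfolding x_def q_def t_def by (simp add: field_simps)
qed

theorem lemma4p7:
  "\<exists>C::real. C > 1 \<and>
    (\<forall>(m1::nat) (m2::nat) (p::real) (b::nat \<Rightarrow> nat) (J1::nat set) (J2::nat set) (r::real).
      0 < p \<and> p < 1 \<and> (\<forall>j<m2. b j \<le> m1) \<and>
      J1 \<noteq> {} \<and> J1 \<subseteq> J2 \<and> J2 \<subseteq> {..<m2} \<and> r > 0 \<and>
      real (card {j \<in> J1. real (b j) \<ge> r}) \<ge> real (card J1) / 2 \<and>
      r \<ge> real (card J2) * (24 * real (bnorm_inf m2 b) ^ 2 / real m1)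
      \<longrightarrow>
      cond_prob (bern_matrix m1 m2 p)
        {A. real (card (I_A m1 A J1 J2)) < real (card J1) * r / 4}
        (Omega_b m1 m2 b)
      \<le> C powr (real (card J1) / 2) *
         exp (- ln (r / (24 * real (card J2) * real (bnorm_inf m2 b) ^ 2 / real m1))
              * r * real (card J1) / 8))"
proof (rule exI[of _ 2], intro conjI allI impI)
  fix m1 m2 :: nat and p :: real and b :: "nat \<Rightarrow> nat" and J1 J2 :: "nat set" and r :: real
  let ?E = "exp (- ln (r / (24 * real (card J2) * real (bnorm_inf m2 b) ^ 2 / real m1))
                 * r * real (card J1) / 8)"
  assume "0 < p \<and> p < 1 \<and> (\<forall>j<m2. b j \<le> m1) \<and>
      J1 \<noteq> {} \<and> J1 \<subseteq> J2 \<and> J2 \<subseteq> {..<m2} \<and> r > 0 \<and>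
      real (card {j \<in> J1. real (b j) \<ge> r}) \<ge> real (card J1) / 2 \<and>
      r \<ge> real (card J2) * (24 * real (bnorm_inf m2 b) ^ 2 / real m1)"
  then have "cond_prob (bern_matrix m1 m2 p)
               {A. real (card (I_A m1 A J1 J2)) < real (card J1) * r / 4} (Omega_b m1 m2 b) \<le> ?E"
    by (intro cond_prob_few_isolated_rows_le) auto
  also have "?E \<le> 2 powr (real (card J1) / 2) * ?E"
    using mult_right_mono[of 1 "2 powr (real (card J1) / 2)" ?E] by (simp add: ge_one_powr_ge_zero)
  finally show "cond_prob (bern_matrix m1 m2 p)
                  {A. real (card (I_A m1 A J1 J2)) < real (card J1) * r / 4} (Omega_b m1 m2 b)
                \<le> 2 powr (real (card J1) / 2) * ?E" .
qed simp

end
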